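(* For every integer $T=6k$ with $k\ge 1$ and every $\sigma\in\mathfrak S_3$, the vector $\sigma c$ with $c=[10k-1,\,4k,\,-8k+2,\,-2k+1,\,-2k+1,\,4k]$ defines a facet of $P^T$.
   Context: For an integer $T\ge 2$, let $\Omega_T$ be the set of words $w=s_1s_2\cdots s_T$ over $\{1,2,3\}$ with $s_l\neq s_{l+1}$ for $l=1,\dots,T-1$. For $w\in\Omega_T$ and an ordered pair $ij$, $i\neq j$, let $x_{ij}(w)$ be the number of indices $1\le l\le T-1$ with $s_ls_{l+1}=ij$. Vectors of $\mathbb R^6$ are indexed in the order $[x_{12},x_{13},x_{21},x_{23},x_{31},x_{32}]$. Let $a_w=[x_{12}(w),\dots,x_{32}(w)]$ and $P^T=\mathrm{conv}\{a_w:w\in\Omega_T\}$. $\mathfrak S_3$ acts on $\mathbb R^6$ by $(\sigma c)_{ij}=c_{\sigma(i)\sigma(j)}$. A vector $c$ defines a facet of $P^T$ if $c\cdot a_w\ge0$ for all $w\in\Omega_T$ and $\{x\in P^T: c\cdot x=0\}$ is a facet of $P^T$. *)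

theory Defs
  imports "HOL-Analysis.Analysis"
begin

definition Omega :: "nat \<Rightarrow> nat list set" where
  "Omega T = {w. length w = T \<and> set w \<subseteq> {1,2,3} \<and>
                 (\<forall>l. Suc l < T \<longrightarrow> w ! l \<noteq> w ! Suc l)}"

definition xcount :: "nat \<Rightarrow> nat \<Rightarrow> nat list \<Rightarrow> nat" where
  "xcount i j w = card {l. Suc l < length w \<and> w ! l = i \<and> w ! Suc l = j}"

definition pairs :: "(nat \<times> nat) list" where
  "pairs = [(1,2),(1,3),(2,1),(2,3),(3,1),(3,2)]"

definition vec_of :: "(nat \<Rightarrow> nat \<Rightarrow> real) \<Rightarrow> real ^ 6" where
  "vec_of f = vector (map (\<lambda>(i,j). f i j) pairs)"

definition avec :: "nat list \<Rightarrow> real ^ 6" where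
  "avec w = vec_of (\<lambda>i j. real (xcount i j w))"

definition PT :: "nat \<Rightarrow> (real ^ 6) set" where
  "PT T = convex hull (avec ` Omega T)"

definition cfun :: "nat \<Rightarrow> nat \<Rightarrow> nat \<Rightarrow> real" where
  "cfun k i j = (if (i,j) = (1,2) then 10 * real k - 1
     else if (i,j) = (1,3) then 4 * real k
     else if (i,j) = (2,1) then - 8 * real k + 2
     else if (i,j) = (2,3) then - 2 * real k + 1
     else if (i,j) = (3,1) then - 2 * real k + 1
     else if (i,j) = (3,2) then 4 * real k
     else 0)"

definition sigma_act :: "(nat \<Rightarrow> nat) \<Rightarrow> (nat \<Rightarrow> nat \<Rightarrow> real) \<Rightarrow> real ^ 6" where
  "sigma_act \<sigma> f = vec_of (\<lambda>i j. f (\<sigma> i) (\<sigma> j))"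

definition defines_facet :: "real ^ 6 \<Rightarrow> nat \<Rightarrow> bool" where
  "defines_facet c T \<longleftrightarrow> (\<forall>w \<in> Omega T. c \<bullet> avec w \<ge> 0) \<and>
      {x \<in> PT T. c \<bullet> x = 0} facet_of PT T"

end

theory Submission
  imports Defs
begin

text \<open>A word of \<open>\<Omega>\<^sub>T\<close> is a walk of length \<open>T - 1\<close> in the complete digraph on
  \<open>{1,2,3}\<close>, so its transition counts \<open>x\<close> satisfy the flow equations
  \<open>out(i) - in(i) = [first letter = i] - [last letter = i]\<close> and \<open>\<Sum> x = T - 1\<close>. For \<open>T = 6k\<close>
  these constraints let one write \<open>c \<cdot> x = k U + V\<close> with integers \<open>V \<ge> 0\<close> and \<open>U \<ge> 0\<close>,
  except in a single configuration where \<open>k U + V = 0\<close>; hence \<open>c \<cdot> x \<ge> 0\<close> on \<open>P\<^sup>T\<close>.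
  Five explicit periodic words attain \<open>c \<cdot> x = 0\<close> with affinely independent count vectors
  and another one does not, while \<open>P\<^sup>T\<close> lies in the hyperplane \<open>\<Sum> x = T - 1\<close>; so the face
  cut out by \<open>c\<close> has dimension \<open>dim P\<^sup>T - 1\<close>. Acting by \<open>\<sigma>\<close> on \<open>c\<close> amounts to relabelling
  letters, which permutes \<open>\<Omega>\<^sub>T\<close> and acts on \<open>\<real>\<^sup>6\<close> by an invertible linear map.\<close>

section \<open>Transition counts\<close>

lemma xcount_Nil [simp]: "xcount i j [] = 0"
  by (simp add: xcount_def)

lemma xcount_Cons:
  "xcount i j (a # v) = of_bool (v \<noteq> [] \<and> a = i \<and> hd v = j) + xcount i j v"
proof -
  let ?A = "{l. Suc l < length v \<and> v ! l = i \<and> v ! Suc l = j}"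
  have "finite ?A"
    by (rule finite_subset[of _ "{..<length v}"]) auto
  moreover have "{l. Suc l < length (a # v) \<and> (a # v) ! l = i \<and> (a # v) ! Suc l = j}
      = (if v \<noteq> [] \<and> a = i \<and> hd v = j then {0} else {}) \<union> Suc ` ?A" (is "?L = ?R")
  proof (rule set_eqI)
    show "l \<in> ?L \<longleftrightarrow> l \<in> ?R" for l
      by (cases l) (auto simp: hd_conv_nth)
  qed
  ultimately show ?thesis
    unfolding xcount_def by (simp add: card_image)
qed

lemma xcount_Cons_Cons [simp]:
  "xcount i j (a # b # v) = of_bool (a = i \<and> b = j) + xcount i j (b # v)"
  by (simp add: xcount_Cons[of i j a])

lemma xcount_singleton [simp]: "xcount i j [a] = 0"
  by (simp add: xcount_Cons)

lemma xcount_append: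
  "xcount i j (u @ v) = xcount i j u + xcount i j v + of_bool (u \<noteq> [] \<and> v \<noteq> [] \<and> last u = i \<and> hd v = j)"
  by (induction u rule: induct_list012) (auto simp: xcount_Cons)

lemma xcount_map: "inj f \<Longrightarrow> xcount (f a) (f b) (map f v) = xcount a b v"
  by (induction v rule: induct_list012) (auto simp: inj_eq)

lemma xcount_diag: "successively (\<noteq>) w \<Longrightarrow> xcount a a w = 0"
  by (induction w rule: induct_list012) auto

lemma Omega_conv_successively:
  "Omega T = {w. length w = T \<and> set w \<subseteq> {1,2,3} \<and> successively (\<noteq>) w}"
  by (auto simp: Omega_def successively_conv_nth)

lemma sum_of_bool_eq:
  assumes "finite A" "y \<in> A"
  shows "(\<Sum>j\<in>A. of_bool (y = j)) = (1 :: nat)"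
    and "(\<Sum>j\<in>A. of_bool (P \<and> y = j)) = (of_bool P :: nat)"
    and "(\<Sum>j\<in>A. of_bool (y = j \<and> P)) = (of_bool P :: nat)"
  using assms by (cases P; simp add: of_bool_def sum.delta)+

lemma sum_xcount_Cons_Cons:
  "(\<Sum>j\<in>A. xcount a j (x # y # v)) = (\<Sum>j\<in>A. of_bool (x = a \<and> y = j)) + (\<Sum>j\<in>A. xcount a j (y # v))"
  "(\<Sum>i\<in>A. xcount i a (x # y # v)) = (\<Sum>i\<in>A. of_bool (x = i \<and> y = a)) + (\<Sum>i\<in>A. xcount i a (y # v))"
  by (simp_all only: xcount_Cons_Cons sum.distrib)

lemma xcount_flow:
  assumes "finite A" "set w \<subseteq> A" "w \<noteq> []"
  shows "(\<Sum>j\<in>A. xcount a j w) + of_bool (last w = a) = (\<Sum>i\<in>A. xcount i a w) + of_bool (hd w = a)"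
  using assms(2,3)
proof (induction w rule: induct_list012)
  case (3 x y v)
  have "x \<in> A" "y \<in> A" using "3.prems" by auto
  then have "(\<Sum>j\<in>A. of_bool (x = a \<and> y = j)) = (of_bool (x = a) :: nat)"
    "(\<Sum>i\<in>A. of_bool (x = i \<and> y = a)) = (of_bool (y = a) :: nat)"
    using sum_of_bool_eq[OF assms(1)] by blast+
  moreover have "(\<Sum>j\<in>A. xcount a j (y # v)) + of_bool (last (y # v) = a)
      = (\<Sum>i\<in>A. xcount i a (y # v)) + of_bool (hd (y # v) = a)"
    by (rule "3.IH") (use "3.prems" in auto)
  moreover have "of_bool (last (x # y # v) = a) = (of_bool (last (y # v) = a) :: nat)"
    "of_bool (hd (y # v) = a) = (of_bool (y = a) :: nat)"
    "of_bool (hd (x # y # v) = a) = (of_bool (x = a) :: nat)"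
    by simp_all
  ultimately show ?case unfolding sum_xcount_Cons_Cons by linarith
qed auto

lemma xcount_total:
  assumes "finite A" "set w \<subseteq> A"
  shows "(\<Sum>i\<in>A. \<Sum>j\<in>A. xcount i j w) = length w - 1"
  using assms(2)
proof (induction w rule: induct_list012)
  case (3 x y v)
  have "x \<in> A" "y \<in> A" using "3.prems" by auto
  then have "(\<Sum>i\<in>A. \<Sum>j\<in>A. of_bool (x = i \<and> y = j)) = (1 :: nat)"
    using sum_of_bool_eq[OF assms(1)] by simp
  moreover have "(\<Sum>i\<in>A. \<Sum>j\<in>A. xcount i j (y # v)) = length (y # v) - 1"
    by (rule "3.IH") (use "3.prems" in auto)
  ultimately show ?case by (simp only: xcount_Cons_Cons sum.distrib length_Cons)
qed auto

lemma exhaust_6: "(x :: 6) = 1 \<or> x = 2 \<or> x = 3 \<or> x = 4 \<or> x = 5 \<or> x = 6"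
proof (induct x)
  case (of_int z)
  then have "z = 0 \<or> z = 1 \<or> z = 2 \<or> z = 3 \<or> z = 4 \<or> z = 5" by fastforce
  then show ?case by auto
qed

lemma sum_UNIV_6: "sum f (UNIV :: 6 set) = f 1 + f 2 + f 3 + f 4 + f 5 + f 6"
proof -
  have UNIV_6: "(UNIV :: 6 set) = {1, 2, 3, 4, 5, 6}"
    using exhaust_6 by auto
  show ?thesis unfolding UNIV_6 by (simp add: add.assoc)
qed

lemma forall_6: "(\<forall>i :: 6. P i) \<longleftrightarrow> P 1 \<and> P 2 \<and> P 3 \<and> P 4 \<and> P 5 \<and> P 6"
  by (metis exhaust_6)

lemma vec6_eq_iff:
  "(x :: 'a ^ 6) = y \<longleftrightarrow> x$1 = y$1 \<and> x$2 = y$2 \<and> x$3 = y$3 \<and> x$4 = y$4 \<and> x$5 = y$5 \<and> x$6 = y$6"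
  by (simp add: vec_eq_iff forall_6)

lemma inner_vec6:
  "(x :: real ^ 6) \<bullet> y = x$1 * y$1 + x$2 * y$2 + x$3 * y$3 + x$4 * y$4 + x$5 * y$5 + x$6 * y$6"
  by (simp add: inner_vec_def sum_UNIV_6)

lemma vector_6_nth [simp]:
  "(vector [a, b, c, d, e, f] :: 'a::zero ^ 6) $ 1 = a"
  "(vector [a, b, c, d, e, f] :: 'a::zero ^ 6) $ 2 = b"
  "(vector [a, b, c, d, e, f] :: 'a::zero ^ 6) $ 3 = c"
  "(vector [a, b, c, d, e, f] :: 'a::zero ^ 6) $ 4 = d"
  "(vector [a, b, c, d, e, f] :: 'a::zero ^ 6) $ 5 = e"
  "(vector [a, b, c, d, e, f] :: 'a::zero ^ 6) $ 6 = f"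
  unfolding vector_def by simp_all

lemma vec_of_nth [simp]:
  "vec_of f $ 1 = f 1 2" "vec_of f $ 2 = f 1 3" "vec_of f $ 3 = f 2 1"
  "vec_of f $ 4 = f 2 3" "vec_of f $ 5 = f 3 1" "vec_of f $ 6 = f 3 2"
  by (simp_all add: vec_of_def pairs_def)

lemma inner_vec_of:
  "vec_of f \<bullet> y = f 1 2 * y$1 + f 1 3 * y$2 + f 2 1 * y$3 + f 2 3 * y$4 + f 3 1 * y$5 + f 3 2 * y$6"
  by (simp add: inner_vec6)

section \<open>Validity of the inequality\<close>

text \<open>Writing the form as \<open>k U + V\<close>, the flow equations give \<open>V \<ge> 0\<close> always and \<open>U \<ge> 0\<close>
  except when \<open>U = -4\<close>, \<open>V = 4k\<close>.\<close>
lemma flow_constrained_form_nonneg: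
  fixes a b c d e f k s1 s2 s3 t1 t2 t3 :: int
  assumes k: "k \<ge> 1" and nonneg: "a \<ge> 0" "b \<ge> 0" "c \<ge> 0" "d \<ge> 0" "e \<ge> 0" "f \<ge> 0"
    and s: "(s1, s2, s3) \<in> {(1,0,0), (0,1,0), (0,0,1)}"
    and t: "(t1, t2, t3) \<in> {(1,0,0), (0,1,0), (0,0,1)}"
    and flow1: "a + b + t1 = c + e + s1" and flow2: "c + d + t2 = a + f + s2"
    and flow3: "e + f + t3 = b + d + s3"
    and total: "a + b + c + d + e + f = 6 * k - 1"
  shows "(10*k - 1) * a + 4*k * b + (-8*k + 2) * c + (-2*k + 1) * d + (-2*k + 1) * e + 4*k * f \<ge> 0"
proof -
  define U where "U = 10*a + 4*b - 8*c - 2*d - 2*e + 4*f"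
  define V where "V = - a + 2*c + d + e"
  define cw where "cw = a + d + e"
  have form: "(10*k - 1) * a + 4*k * b + (-8*k + 2) * c + (-2*k + 1) * d + (-2*k + 1) * e + 4*k * f
      = k * U + V"
    unfolding U_def V_def by (simp add: algebra_simps)
  have st: "s1 + s2 + s3 = 1" "t1 + t2 + t3 = 1" "s1 \<ge> 0" "s2 \<ge> 0" "s3 \<ge> 0" "t1 \<ge> 0" "t2 \<ge> 0" "t3 \<ge> 0"
    using s t by auto
  have U_eq: "U = 8 * (t2 - s2) + 4 * (t3 - s3) + 2 * cw"
    unfolding U_def cw_def using flow2 flow3 by (simp add: algebra_simps)
  have V_eq: "3 * V = 3 * (s2 - t2) + 12 * k - 2 - cw - (s1 - t1) + (s3 - t3)"
    unfolding V_def cw_def using flow1 flow2 flow3 total by (simp add: algebra_simps)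
  have cw_bounds: "0 \<le> cw" "cw \<le> 6 * k - 1"
    unfolding cw_def using nonneg total by linarith+
  have "3 * V \<ge> 0" using V_eq cw_bounds st k by (smt (verit))
  then have V_nonneg: "V \<ge> 0" by linarith
  show ?thesis
  proof (cases "U < 0")
    case True
    then have "cw \<le> 3" using U_eq st by (smt (verit))
    then have "cw \<in> {0, 1, 2, 3}" using cw_bounds by auto
    then have "U = -4 \<and> V = 4 * k"
      using s t U_eq V_eq True by (elim insertE; simp; presburger)
    then show ?thesis using form by simp
  next
    case False
    then show ?thesis using form V_nonneg k by simp
  qed
qed

lemma cfun_inner_avec_nonneg:
  assumes k: "k \<ge> 1" and w: "w \<in> Omega (6 * k)"
  shows "vec_of (cfun k) \<bullet> avec w \<ge> 0"
proof -
  have len: "length w = 6 * k" and letters: "set w \<subseteq> {1, 2, 3}" and alt: "successively (\<noteq>) w"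
    using w by (auto simp: Omega_conv_successively)
  have ne: "w \<noteq> []" using len k by auto
  have ends: "hd w \<in> {1, 2, 3}" "last w \<in> {1, 2, 3}"
    using letters ne hd_in_set last_in_set by blast+
  have indicator: "x \<in> {1, 2, 3::nat} \<Longrightarrow>
      (of_bool (x = 1), of_bool (x = 2), of_bool (x = 3)) \<in> {(1,0,0), (0,1,0), (0,0,1) :: int \<times> int \<times> int}" for x
    by auto
  have flow: "(\<Sum>j\<in>{1,2,3}. int (xcount a j w)) + of_bool (last w = a)
      = (\<Sum>i\<in>{1,2,3}. int (xcount i a w)) + of_bool (hd w = a)" for a
    using arg_cong[OF xcount_flow[OF _ letters ne, of a], of int] by simp
  have total: "(\<Sum>i\<in>{1,2,3}. \<Sum>j\<in>{1,2,3}. int (xcount i j w)) = 6 * int k - 1"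
    using arg_cong[OF xcount_total[OF _ letters], of int] len k by (simp add: of_nat_diff)
  have "(10*int k - 1) * xcount 1 2 w + 4*int k * xcount 1 3 w + (-8*int k + 2) * xcount 2 1 w
      + (-2*int k + 1) * xcount 2 3 w + (-2*int k + 1) * xcount 3 1 w + 4*int k * xcount 3 2 w \<ge> 0"
    apply (rule flow_constrained_form_nonneg[OF _ _ _ _ _ _ _ indicator[OF ends(1)] indicator[OF ends(2)]])
    using flow[of 1] flow[of 2] flow[of 3] total k
    by (simp_all add: xcount_diag[OF alt] split del: split_of_bool)
  then have "real_of_int ((10*int k - 1) * xcount 1 2 w + 4*int k * xcount 1 3 w + (-8*int k + 2) * xcount 2 1 w
      + (-2*int k + 1) * xcount 2 3 w + (-2*int k + 1) * xcount 3 1 w + 4*int k * xcount 3 2 w) \<ge> 0"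
    by linarith
  then show ?thesis unfolding avec_def inner_vec_of by (simp add: mult.assoc cfun_def)
qed

section \<open>Relabelling letters\<close>

lemma permutes_123_cases:
  assumes "\<sigma> permutes {1, 2, 3 :: nat}"
  shows "(\<sigma> 1, \<sigma> 2, \<sigma> 3) \<in> {(1,2,3), (1,3,2), (2,1,3), (2,3,1), (3,1,2), (3,2,1)}"
proof -
  have "\<sigma> 1 \<in> {1, 2, 3}" "\<sigma> 2 \<in> {1, 2, 3}" "\<sigma> 3 \<in> {1, 2, 3}"
    using permutes_in_image[OF assms] by auto
  moreover have "\<sigma> 1 \<noteq> \<sigma> 2" "\<sigma> 1 \<noteq> \<sigma> 3" "\<sigma> 2 \<noteq> \<sigma> 3"
    using permutes_inj[OF assms] by (auto simp: inj_eq)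
  ultimately show ?thesis by auto
qed

lemma map_permutes_Omega:
  assumes "\<sigma> permutes {1, 2, 3 :: nat}" "w \<in> Omega T"
  shows "map \<sigma> w \<in> Omega T"
  using assms(2) permutes_in_image[OF assms(1)] permutes_inj[OF assms(1)]
  by (auto simp: Omega_conv_successively successively_map inj_eq)

lemma sigma_act_inner_avec:
  assumes "\<sigma> permutes {1, 2, 3 :: nat}"
  shows "sigma_act \<sigma> f \<bullet> avec w = vec_of f \<bullet> avec (map \<sigma> w)"
proof -
  define g where "g i j = f i j * real (xcount i j (map \<sigma> w))" for i j
  have "sigma_act \<sigma> f \<bullet> avec w = g (\<sigma> 1) (\<sigma> 2) + g (\<sigma> 1) (\<sigma> 3) + g (\<sigma> 2) (\<sigma> 1)
      + g (\<sigma> 2) (\<sigma> 3) + g (\<sigma> 3) (\<sigma> 1) + g (\<sigma> 3) (\<sigma> 2)"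
    unfolding sigma_act_def avec_def inner_vec_of g_def
    by (simp add: xcount_map[OF permutes_inj[OF assms]])
  also have "\<dots> = g 1 2 + g 1 3 + g 2 1 + g 2 3 + g 3 1 + g 3 2"
    using permutes_123_cases[OF assms] by (auto simp: ac_simps)
  also have "\<dots> = vec_of f \<bullet> avec (map \<sigma> w)"
    unfolding avec_def inner_vec_of g_def by simp
  finally show ?thesis .
qed

lemma sigma_act_inner_avec_map_inv:
  assumes "\<sigma> permutes {1, 2, 3 :: nat}"
  shows "sigma_act \<sigma> f \<bullet> avec (map (inv \<sigma>) w) = vec_of f \<bullet> avec w"
  using sigma_act_inner_avec[OF assms, of f "map (inv \<sigma>) w"]
  by (simp add: comp_def permutes_inverses(1)[OF assms])

text \<open>A left inverse of \<open>vec_of\<close>; composed with \<open>sigma_act \<sigma>\<close> it is the permutation of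
  coordinates of \<open>\<real>\<^sup>6\<close> induced by relabelling letters.\<close>
definition pair_coord :: "real ^ 6 \<Rightarrow> nat \<Rightarrow> nat \<Rightarrow> real" where
  "pair_coord y i j =
    (if (i, j) = (1, 2) then y$1 else if (i, j) = (1, 3) then y$2 else if (i, j) = (2, 1) then y$3
     else if (i, j) = (2, 3) then y$4 else if (i, j) = (3, 1) then y$5 else if (i, j) = (3, 2) then y$6
     else 0)"

lemma linear_sigma_act_pair_coord: "linear (\<lambda>y. sigma_act \<sigma> (pair_coord y))"
  by (rule linearI) (simp_all add: sigma_act_def vec6_eq_iff pair_coord_def)

lemma inj_sigma_act_pair_coord:
  assumes "\<sigma> permutes {1, 2, 3 :: nat}"
  shows "inj (\<lambda>y. sigma_act \<sigma> (pair_coord y))"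
proof (rule injI)
  fix x y assume "sigma_act \<sigma> (pair_coord x) = sigma_act \<sigma> (pair_coord y)"
  then show "x = y"
    using permutes_123_cases[OF assms]
    by (auto simp: sigma_act_def vec6_eq_iff pair_coord_def)
qed

lemma sigma_act_pair_coord_avec:
  assumes "\<sigma> permutes {1, 2, 3 :: nat}"
  shows "sigma_act \<sigma> (pair_coord (avec w)) = avec (map (inv \<sigma>) w)"
proof -
  have "xcount i j (map (inv \<sigma>) w) = xcount (\<sigma> i) (\<sigma> j) w" for i j
    using xcount_map[OF permutes_inj[OF permutes_inv[OF assms]], of "\<sigma> i" "\<sigma> j" w]
    by (simp add: permutes_inverses(2)[OF assms])
  then show ?thesis
    using permutes_123_cases[OF assms]
    by (auto simp: sigma_act_def avec_def vec6_eq_iff pair_coord_def)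
qed

section \<open>Words on the face\<close>

lemma xcount_append_cycles:
  assumes "u \<noteq> []" "last u = r"
  shows "xcount i j (u @ concat (replicate n [p, q, r])) = xcount i j u +
     n * (of_bool (r = i \<and> p = j) + of_bool (p = i \<and> q = j) + of_bool (q = i \<and> r = j))"
  using assms
proof (induction n arbitrary: u)
  case (Suc n)
  have "u @ concat (replicate (Suc n) [p, q, r]) = (u @ [p, q, r]) @ concat (replicate n [p, q, r])"
    by simp
  then show ?case using Suc.IH[of "u @ [p, q, r]"] Suc.prems by (simp add: xcount_append)
qed simp

lemma Omega_append_cycles:
  assumes "successively (\<noteq>) u" "u \<noteq> []" "last u = r" "set u \<subseteq> {1, 2, 3}"
    "{p, q, r} \<subseteq> {1, 2, 3}" "p \<noteq> q" "q \<noteq> r" "r \<noteq> p" "length u + 3 * n = T"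
  shows "u @ concat (replicate n [p, q, r]) \<in> Omega T"
  using assms
proof (induction n arbitrary: u)
  case (Suc n)
  have "u @ concat (replicate (Suc n) [p, q, r]) = (u @ [p, q, r]) @ concat (replicate n [p, q, r])"
    by simp
  moreover have "(u @ [p, q, r]) @ concat (replicate n [p, q, r]) \<in> Omega T"
    by (rule Suc.IH) (use Suc.prems in \<open>auto simp: successively_append_iff\<close>)
  ultimately show ?case by simp
qed (simp add: Omega_conv_successively)

definition tight_word1 :: "nat \<Rightarrow> nat list" where
  "tight_word1 m = [3,2,1,3,2,1] @ concat (replicate (2 * m) [3,2,1])"
definition tight_word2 :: "nat \<Rightarrow> nat list" where
  "tight_word2 m = [2,3,2,3,2,1] @ concat (replicate (2 * m) [3,2,1])"
definition tight_word3 :: "nat \<Rightarrow> nat list" where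
  "tight_word3 m = [2,1,3,1,3,1] @ concat (replicate (2 * m) [3,2,1])"
definition tight_word4 :: "nat \<Rightarrow> nat list" where
  "tight_word4 m = [2,1,2,3,2,1] @ concat (replicate (2 * m) [3,2,1])"
definition tight_word5 :: "nat \<Rightarrow> nat list" where
  "tight_word5 m = [2,1,3,2,1,3] @ concat (replicate (2 * m) [2,1,3])"
definition slack_word :: "nat \<Rightarrow> nat list" where
  "slack_word m = [1,2,3,1,2,3] @ concat (replicate (2 * m) [1,2,3])"

lemmas word_defs = tight_word1_def tight_word2_def tight_word3_def tight_word4_def tight_word5_def
  slack_word_def

lemma words_in_Omega:
  "tight_word1 m \<in> Omega (6 * Suc m)" "tight_word2 m \<in> Omega (6 * Suc m)"
  "tight_word3 m \<in> Omega (6 * Suc m)" "tight_word4 m \<in> Omega (6 * Suc m)"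
  "tight_word5 m \<in> Omega (6 * Suc m)" "slack_word m \<in> Omega (6 * Suc m)"
  unfolding word_defs
  by (rule Omega_append_cycles; simp)+

lemma avec_words:
  "avec (tight_word1 m) = vector [0, 2 * real m + 1, 2 * real m + 2, 0, 0, 2 * real m + 2]"
  "avec (tight_word2 m) = vector [0, 2 * real m, 2 * real m + 1, 2, 0, 2 * real m + 2]"
  "avec (tight_word3 m) = vector [0, 2 * real m + 2, 2 * real m + 1, 0, 2, 2 * real m]"
  "avec (tight_word4 m) = vector [1, 2 * real m, 2 * real m + 2, 1, 0, 2 * real m + 1]"
  "avec (tight_word5 m) = vector [0, 2 * real m + 2, 2 * real m + 2, 0, 0, 2 * real m + 1]"
  "avec (slack_word m) = vector [2 * real m + 2, 0, 0, 2 * real m + 2, 2 * real m + 1, 0]"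
  by (simp_all add: vec6_eq_iff avec_def word_defs xcount_append_cycles del: append_Cons)


lemma inner_cfun_words:
  "vec_of (cfun (Suc m)) \<bullet> avec (tight_word1 m) = 0"
  "vec_of (cfun (Suc m)) \<bullet> avec (tight_word2 m) = 0"
  "vec_of (cfun (Suc m)) \<bullet> avec (tight_word3 m) = 0"
  "vec_of (cfun (Suc m)) \<bullet> avec (tight_word4 m) = 0"
  "vec_of (cfun (Suc m)) \<bullet> avec (tight_word5 m) = 0"
  "vec_of (cfun (Suc m)) \<bullet> avec (slack_word m) > 0"
  by (simp_all add: inner_vec_of avec_words cfun_def algebra_simps)
    (simp add: add_pos_nonneg)

lemma aff_dim_tight_words:
  "aff_dim {avec (tight_word1 m), avec (tight_word2 m), avec (tight_word3 m),
            avec (tight_word4 m), avec (tight_word5 m)} = 4"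
proof -
  define p where "p = avec (tight_word1 m)"
  define d2 d3 d4 d5 :: "real ^ 6"
    where "d2 = vector [0, -1, -1, 2, 0, 0]" and "d3 = vector [0, 1, -1, 0, 2, -2]"
      and "d4 = vector [1, -1, 0, 1, 0, -1]" and "d5 = vector [0, 1, 0, 0, 0, -1]"
  let ?S = "{avec (tight_word1 m), avec (tight_word2 m), avec (tight_word3 m),
             avec (tight_word4 m), avec (tight_word5 m)}"
  have "avec (tight_word2 m) - p = d2" "avec (tight_word3 m) - p = d3"
    "avec (tight_word4 m) - p = d4" "avec (tight_word5 m) - p = d5"
    by (simp_all add: p_def d2_def d3_def d4_def d5_def avec_words vec6_eq_iff)
  then have "(+) (- p) ` ?S = {0, d2, d3, d4, d5}"
    by (simp add: p_def)
  moreover have "aff_dim ?S = int (dim ((+) (- p) ` ?S))"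
    by (rule aff_dim_eq_dim) (simp add: hull_inc p_def)
  moreover have "dim {0, d2, d3, d4, d5} = dim {d2, d3, d4, d5}"
    by (simp add: dim_insert span_zero)
  moreover have "d5 \<notin> span {}" "d4 \<notin> span {d5}" "d3 \<notin> span {d4, d5}" "d2 \<notin> span {d3, d4, d5}"
    by (auto simp: d2_def d3_def d4_def d5_def span_breakdown_eq vec6_eq_iff)
  then have "dim {d2, d3, d4, d5} = 4"
    by (simp add: dim_insert)
  ultimately show ?thesis by simp
qed

section \<open>Dimension count\<close>

lemma aff_dim_PT_le:
  assumes "T \<ge> 1"
  shows "aff_dim (PT T) \<le> 5"
proof -
  let ?one = "vec_of (\<lambda>i j. 1)"
  have "?one \<bullet> avec w = real T - 1" if "w \<in> Omega T" for w
  proof -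
    have "set w \<subseteq> {1, 2, 3}" "length w = T" "successively (\<noteq>) w"
      using that by (auto simp: Omega_conv_successively)
    then have "(\<Sum>i\<in>{1,2,3}. \<Sum>j\<in>{1,2,3}. real (xcount i j w)) = real T - 1"
      using arg_cong[OF xcount_total[of "{1, 2, 3}" w], of real] assms
      by (simp add: of_nat_diff)
    then show ?thesis
      using \<open>successively (\<noteq>) w\<close> by (simp add: avec_def inner_vec_of xcount_diag)
  qed
  then have "PT T \<subseteq> {x. ?one \<bullet> x = real T - 1}"
    unfolding PT_def by (intro hull_minimal) (auto simp: convex_hyperplane)
  then have "aff_dim (PT T) \<le> aff_dim {x. ?one \<bullet> x = real T - 1}"
    by (rule aff_dim_subset)
  also have "\<dots> = 5"
    by (simp add: vec6_eq_iff)
  finally show ?thesis .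
qed

lemma facet_of_convex_hull_supporting_hyperplane:
  fixes S :: "'a::euclidean_space set"
  assumes nonneg: "\<And>x. x \<in> S \<Longrightarrow> c \<bullet> x \<ge> 0"
    and B: "B \<subseteq> S" "\<And>x. x \<in> B \<Longrightarrow> c \<bullet> x = 0" "B \<noteq> {}"
    and dim: "aff_dim (convex hull S) \<le> aff_dim B + 1"
    and slack: "y \<in> S" "c \<bullet> y > 0"
  shows "{x \<in> convex hull S. c \<bullet> x = 0} facet_of convex hull S"
proof -
  let ?P = "convex hull S" and ?F = "{x \<in> convex hull S. c \<bullet> x = 0}"
  have "?P \<subseteq> {x. c \<bullet> x \<ge> 0}"
    using nonneg by (intro hull_minimal) (auto simp: convex_halfspace_ge)
  then have "?P \<inter> {x. c \<bullet> x = 0} face_of ?P"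
    by (intro face_of_Int_supporting_hyperplane_ge) auto
  then have face: "?F face_of ?P"
    by (simp add: Int_def conj_commute)
  have "B \<subseteq> ?F"
    using B by (auto intro: hull_inc)
  then have "aff_dim B \<le> aff_dim ?F" "?F \<noteq> {}"
    using aff_dim_subset B(3) by auto
  moreover have "y \<in> ?P" "y \<notin> ?F"
    using slack by (auto intro: hull_inc)
  then have "aff_dim ?F < aff_dim ?P"
    using face_of_aff_dim_lt[OF convex_convex_hull face] by blast
  ultimately show ?thesis
    using face dim by (simp add: facet_of_def)
qed

theorem proposition12:
  fixes k :: nat and \<sigma> :: "nat \<Rightarrow> nat"
  assumes "k \<ge> 1" and "\<sigma> permutes {1,2,3}"
  shows "defines_facet (sigma_act \<sigma> (cfun k)) (6 * k)"
proof -
  obtain m where k: "k = Suc m" using assms(1) by (cases k) auto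
  let ?c = "sigma_act \<sigma> (cfun k)"
  let ?B = "(\<lambda>y. sigma_act \<sigma> (pair_coord y)) ` {avec (tight_word1 m), avec (tight_word2 m),
            avec (tight_word3 m), avec (tight_word4 m), avec (tight_word5 m)}"
  have nonneg: "\<forall>w \<in> Omega (6 * k). ?c \<bullet> avec w \<ge> 0"
    using assms sigma_act_inner_avec cfun_inner_avec_nonneg map_permutes_Omega by metis
  have "aff_dim ?B = 4"
    using aff_dim_injective_linear_image[OF linear_sigma_act_pair_coord
        inj_sigma_act_pair_coord[OF assms(2)]] aff_dim_tight_words by metis
  then have "{x \<in> PT (6 * k). ?c \<bullet> x = 0} facet_of PT (6 * k)"
    unfolding PT_def
    using nonneg words_in_Omega[of m, folded k] inner_cfun_words[of m, folded k]
      aff_dim_PT_le[of "6 * k", unfolded PT_def] assms(1)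
    by (intro facet_of_convex_hull_supporting_hyperplane
        [where B = ?B and y = "avec (map (inv \<sigma>) (slack_word m))"])
      (auto simp: sigma_act_pair_coord_avec[OF assms(2)] sigma_act_inner_avec_map_inv[OF assms(2)]
        map_permutes_Omega[OF permutes_inv[OF assms(2)]])
  with nonneg show ?thesis
    unfolding defines_facet_def by blast
qed

end
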